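(* Let $K\subset\mathbb{R}^n$ be a nonempty convex set and $c>0$ fixed. Then the function $\varepsilon\mapsto M^{\operatorname{loc}}(\varepsilon)$ on $(0,\infty)$ is monotone non-increasing.
   Context: $B(\theta,r)$ is the closed Euclidean ball. $M(\delta,S)$ is the largest cardinality of a $\delta$-packing of $S$ (distinct points at Euclidean distance $\ge\delta$); $M^{\operatorname{loc}}(\varepsilon)=\sup_{\theta\in K}M(\varepsilon/c,B(\theta,\varepsilon)\cap K)$. *)

theory Defs
  imports "HOL-Analysis.Analysis" "HOL-Library.Extended_Nat"
begin

definition is_packing :: "real \<Rightarrow> 'a::euclidean_space set \<Rightarrow> 'a set \<Rightarrow> bool" where
  "is_packing \<delta> S P \<longleftrightarrow> finite P \<and> P \<subseteq> S \<and>
     (\<forall>x\<in>P. \<forall>y\<in>P. x \<noteq> y \<longrightarrow> dist x y \<ge> \<delta>)"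

definition packing_number :: "real \<Rightarrow> 'a::euclidean_space set \<Rightarrow> enat" where
  "packing_number \<delta> S = (SUP P\<in>{P. is_packing \<delta> S P}. enat (card P))"

definition local_packing :: "'a::euclidean_space set \<Rightarrow> real \<Rightarrow> real \<Rightarrow> enat" where
  "local_packing K c \<epsilon> = (SUP \<theta>\<in>K. packing_number (\<epsilon> / c) (cball \<theta> \<epsilon> \<inter> K))"

end

theory Submission
  imports Defs
begin

(* For \<epsilon>1 \<le> \<epsilon>2 and \<theta> \<in> K, the homothety with centre \<theta> and ratio \<epsilon>1/\<epsilon>2 maps
   cball \<theta> \<epsilon>2 \<inter> K into cball \<theta> \<epsilon>1 \<inter> K by convexity, and it turns an (\<epsilon>2/c)-packing
   into an (\<epsilon>1/c)-packing of the same size. *)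

lemma packing_number_mono:
  assumes "S \<subseteq> S'"
  shows "packing_number \<delta> S \<le> packing_number \<delta> S'"
proof -
  have "{P. is_packing \<delta> S P} \<subseteq> {P. is_packing \<delta> S' P}"
    using assms by (auto simp: is_packing_def)
  then show ?thesis
    unfolding packing_number_def by (rule SUP_subset_mono) simp
qed

lemma is_packing_image_expanding:
  assumes P: "is_packing \<delta> S P" and "t > 0"
    and expand: "\<And>x y. x \<in> S \<Longrightarrow> y \<in> S \<Longrightarrow> dist (f x) (f y) \<ge> t * dist x y"
  shows "is_packing (t * \<delta>) (f ` S) (f ` P)"
  unfolding is_packing_def
proof (intro conjI ballI impI)
  show "finite (f ` P)" "f ` P \<subseteq> f ` S"
    using P by (auto simp: is_packing_def)
  fix a b assume "a \<in> f ` P" "b \<in> f ` P" "a \<noteq> b"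
  then obtain x y where xy: "x \<in> P" "y \<in> P" "x \<noteq> y" "a = f x" "b = f y"
    by blast
  with P have "x \<in> S" "y \<in> S" "dist x y \<ge> \<delta>"
    by (auto simp: is_packing_def)
  then have "t * \<delta> \<le> t * dist x y"
    using \<open>t > 0\<close> by simp
  also have "\<dots> \<le> dist a b"
    using expand \<open>x \<in> S\<close> \<open>y \<in> S\<close> xy by simp
  finally show "t * \<delta> \<le> dist a b" .
qed

lemma packing_number_le_image_expanding:
  assumes "t > 0"
    and expand: "\<And>x y. x \<in> S \<Longrightarrow> y \<in> S \<Longrightarrow> dist (f x) (f y) \<ge> t * dist x y"
  shows "packing_number \<delta> S \<le> packing_number (t * \<delta>) (f ` S)"
  unfolding packing_number_def
proof (rule SUP_least)
  fix P assume "P \<in> {P. is_packing \<delta> S P}"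
  then have P: "is_packing \<delta> S P" by simp
  have "inj_on f P"
  proof (rule inj_onI)
    fix x y assume "x \<in> P" "y \<in> P" "f x = f y"
    then have "x \<in> S" "y \<in> S"
      using P by (auto simp: is_packing_def)
    then have "t * dist x y \<le> 0"
      using expand[of x y] \<open>f x = f y\<close> by simp
    then show "x = y"
      using \<open>t > 0\<close> by (simp add: mult_le_0_iff)
  qed
  then have "enat (card P) = enat (card (f ` P))"
    by (simp add: card_image)
  also have "\<dots> \<le> (SUP Q\<in>{Q. is_packing (t * \<delta>) (f ` S) Q}. enat (card Q))"
    using is_packing_image_expanding[OF P assms] by (intro SUP_upper) simp
  finally show "enat (card P) \<le> \<dots>" .
qed

lemma dist_homothety:
  fixes \<theta> x y :: "'a::real_normed_vector"
  shows "dist (\<theta> + t *\<^sub>R (x - \<theta>)) (\<theta> + t *\<^sub>R (y - \<theta>)) = \<bar>t\<bar> * dist x y"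
proof -
  have "(\<theta> + t *\<^sub>R (x - \<theta>)) - (\<theta> + t *\<^sub>R (y - \<theta>)) = t *\<^sub>R (x - y)"
    by (simp add: scaleR_diff_right)
  then show ?thesis
    by (simp add: dist_norm)
qed

lemma homothety_cball_Int_convex_subset:
  fixes \<theta> :: "'a::real_normed_vector"
  assumes "convex K" "\<theta> \<in> K" "0 \<le> t" "t \<le> 1"
  shows "(\<lambda>x. \<theta> + t *\<^sub>R (x - \<theta>)) ` (cball \<theta> r \<inter> K) \<subseteq> cball \<theta> (t * r) \<inter> K"
  unfolding image_subset_iff
proof
  fix x assume x: "x \<in> cball \<theta> r \<inter> K"
  have "\<theta> + t *\<^sub>R (x - \<theta>) = (1 - t) *\<^sub>R \<theta> + t *\<^sub>R x"
    by (simp add: algebra_simps)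
  then have "\<theta> + t *\<^sub>R (x - \<theta>) \<in> K"
    using assms x by (simp add: convex_alt)
  moreover have "dist \<theta> (\<theta> + t *\<^sub>R (x - \<theta>)) = t * dist \<theta> x"
    using dist_homothety[of \<theta> t \<theta> x] \<open>0 \<le> t\<close> by simp
  moreover have "t * dist \<theta> x \<le> t * r"
    using x \<open>0 \<le> t\<close> by (simp add: mult_left_mono)
  ultimately show "\<theta> + t *\<^sub>R (x - \<theta>) \<in> cball \<theta> (t * r) \<inter> K"
    by simp
qed

lemma packing_number_cball_Int_convex_antimono:
  assumes "convex K" "\<theta> \<in> K" "0 < \<epsilon>\<^sub>1" "\<epsilon>\<^sub>1 \<le> \<epsilon>\<^sub>2"
  shows "packing_number (\<epsilon>\<^sub>2 / c) (cball \<theta> \<epsilon>\<^sub>2 \<inter> K) \<le> packing_number (\<epsilon>\<^sub>1 / c) (cball \<theta> \<epsilon>\<^sub>1 \<inter> K)"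
proof -
  define t where "t = \<epsilon>\<^sub>1 / \<epsilon>\<^sub>2"
  have "0 < t" "t \<le> 1" "t * \<epsilon>\<^sub>2 = \<epsilon>\<^sub>1" "t * (\<epsilon>\<^sub>2 / c) = \<epsilon>\<^sub>1 / c"
    using assms(3,4) by (auto simp: t_def)
  let ?f = "\<lambda>x. \<theta> + t *\<^sub>R (x - \<theta>)"
  have "packing_number (\<epsilon>\<^sub>2 / c) (cball \<theta> \<epsilon>\<^sub>2 \<inter> K)
      \<le> packing_number (\<epsilon>\<^sub>1 / c) (?f ` (cball \<theta> \<epsilon>\<^sub>2 \<inter> K))"
    unfolding \<open>t * (\<epsilon>\<^sub>2 / c) = \<epsilon>\<^sub>1 / c\<close>[symmetric]
    using \<open>0 < t\<close>
    by (intro packing_number_le_image_expanding) (auto simp: dist_homothety simp del: dist_add_cancel)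
  also have "\<dots> \<le> packing_number (\<epsilon>\<^sub>1 / c) (cball \<theta> \<epsilon>\<^sub>1 \<inter> K)"
    using homothety_cball_Int_convex_subset[of K \<theta> t \<epsilon>\<^sub>2] assms \<open>0 < t\<close> \<open>t \<le> 1\<close> \<open>t * \<epsilon>\<^sub>2 = \<epsilon>\<^sub>1\<close>
    by (intro packing_number_mono) simp
  finally show ?thesis .
qed

theorem mainTheorem7:
  fixes K :: "'a::euclidean_space set" and c :: real
  assumes "K \<noteq> {}" and "convex K" and "c > 0"
  shows "\<forall>\<epsilon>1 \<epsilon>2. 0 < \<epsilon>1 \<longrightarrow> \<epsilon>1 \<le> \<epsilon>2 \<longrightarrow> local_packing K c \<epsilon>2 \<le> local_packing K c \<epsilon>1"
  unfolding local_packing_def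
proof (intro allI impI SUP_mono)
  fix \<epsilon>\<^sub>1 \<epsilon>\<^sub>2 :: real and \<theta> assume "0 < \<epsilon>\<^sub>1" "\<epsilon>\<^sub>1 \<le> \<epsilon>\<^sub>2" "\<theta> \<in> K"
  then show "\<exists>\<theta>'\<in>K. packing_number (\<epsilon>\<^sub>2 / c) (cball \<theta> \<epsilon>\<^sub>2 \<inter> K) \<le> packing_number (\<epsilon>\<^sub>1 / c) (cball \<theta>' \<epsilon>\<^sub>1 \<inter> K)"
    using packing_number_cball_Int_convex_antimono[OF \<open>convex K\<close>] by blast
qed

end
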